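(* Let $F$ be a finite abelian group. Then: (i) $A_F(G_F)\subseteq C_F:=\big\{|F|-4k\mid k=0,\ldots,\lfloor |F|/2\rfloor\big\}^F\cap\mathbb R^F_{\rm ev}$, and $|F|\,\mathbf 1_F\in A_F(G_F)$, where $\mathbf 1_F$ is the constant function $1$; (ii) in general $A_F(G_F)$ is not a convex subset of $C_F$: there exists a finite abelian group $F$ for which $A_F(G_F)$ is not convex; (iii) for every $g\in\mathrm{Aut}(F)$ one has $A_F\circ\Psi^{(G)}_g=\Psi^{(\rm ev)}_g\circ A_F$, and $A_F(G_F)$ is invariant under $\Psi^{(\rm ev)}_g$.
   Context: $F$ is a finite abelian group (additive), $G_F=\{-1,1\}^F$, and $A_F:G_F\to\mathbb Z^F$ is $A_F(\sigma)_f=\sum_{\ell\in F}\sigma_\ell\sigma_{\ell+f}$. $\mathbb R^F_{\rm ev}=\{h\in\mathbb R^F: h_{-f}=h_f\ \forall f\}$. A subset $S\subseteq C_F$ is called convex if whenever $s_0,s_1\in S$, $t\in(0,1)$ and $s_t:=(1-t)s_0+ts_1\in C_F$, then $s_t\in S$. For $g\in\mathrm{Aut}(F)$ define $\Psi^{(G)}_g:G_F\to G_F$, $\Psi^{(G)}_g(\sigma)_f=\sigma_{g^{-1}(f)}$, and $\Psi^{(\rm ev)}_g:\mathbb R^F_{\rm ev}\to\mathbb R^F_{\rm ev}$, $\Psi^{(\rm ev)}_g(h)_f=h_{g^{-1}(f)}$. *)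

theory Defs
  imports "HOL-Algebra.Algebra"
begin

text \<open>The finite abelian group F is a commutative group G in the HOL-Algebra sense
(written multiplicatively: the group operation of G plays the role of + in F,
inverse plays the role of negation).\<close>

definition sigmas :: "('a, 'b) monoid_scheme \<Rightarrow> ('a \<Rightarrow> real) set"
  where "sigmas G = carrier G \<rightarrow>\<^sub>E {-1, 1}"

definition autocorr :: "('a, 'b) monoid_scheme \<Rightarrow> ('a \<Rightarrow> real) \<Rightarrow> ('a \<Rightarrow> real)"
  where "autocorr G \<sigma> = (\<lambda>f\<in>carrier G. \<Sum>l\<in>carrier G. \<sigma> l * \<sigma> (l \<otimes>\<^bsub>G\<^esub> f))"

definition even_funs :: "('a, 'b) monoid_scheme \<Rightarrow> ('a \<Rightarrow> real) set"
  where "even_funs G = {h \<in> carrier G \<rightarrow>\<^sub>E UNIV. \<forall>f\<in>carrier G. h (inv\<^bsub>G\<^esub> f) = h f}"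

definition C_set :: "('a, 'b) monoid_scheme \<Rightarrow> ('a \<Rightarrow> real) set"
  where "C_set G = (carrier G \<rightarrow>\<^sub>E
      {real (card (carrier G)) - 4 * real k | k. k \<le> card (carrier G) div 2}) \<inter> even_funs G"

definition convex_comb :: "('a, 'b) monoid_scheme \<Rightarrow> real \<Rightarrow> ('a \<Rightarrow> real) \<Rightarrow> ('a \<Rightarrow> real) \<Rightarrow> ('a \<Rightarrow> real)"
  where "convex_comb G t s0 s1 = (\<lambda>f\<in>carrier G. (1 - t) * s0 f + t * s1 f)"

definition convex_in :: "('a, 'b) monoid_scheme \<Rightarrow> ('a \<Rightarrow> real) set \<Rightarrow> ('a \<Rightarrow> real) set \<Rightarrow> bool"
  where "convex_in G C S \<longleftrightarrow> (\<forall>s0\<in>S. \<forall>s1\<in>S. \<forall>t::real. 0 < t \<and> t < 1 \<longrightarrow>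
            convex_comb G t s0 s1 \<in> C \<longrightarrow> convex_comb G t s0 s1 \<in> S)"

definition Psi :: "('a, 'b) monoid_scheme \<Rightarrow> ('a \<Rightarrow> 'a) \<Rightarrow> ('a \<Rightarrow> real) \<Rightarrow> ('a \<Rightarrow> real)"
  where "Psi G g h = (\<lambda>f\<in>carrier G. h (inv_into (carrier G) g f))"

end

theory Submission
  imports Defs
begin

(* A_F sigma f = |F| - 2 d, where d counts the l with sigma l ~= sigma (l + f).  The product
   of all terms sigma l * sigma (l + f) is (prod sigma)^2 = 1, so d is even, which gives the
   values |F| - 4k; reindexing l |-> l + f gives evenness in f, and sigma = 1 gives |F| 1_F.
   An automorphism merely reindexes the defining sum.  On Z/4 the midpoint (4,0,4,0) of
   A(1,1,1,1) = (4,4,4,4) and A(1,-1,1,-1) = (4,-4,4,-4) lies in C_F but is no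
   autocorrelation: A sigma 2 = 4 forces sigma 2 = sigma 0 and sigma 3 = sigma 1, and then
   A sigma 1 = 4 sigma 0 sigma 1 ~= 0. *)

lemma (in group) bij_betw_mult_right:
  assumes c: "c \<in> carrier G"
  shows "bij_betw (\<lambda>x. x \<otimes> c) (carrier G) (carrier G)"
proof (rule bij_betw_imageI[OF inj_on_multc[OF c]])
  show "(\<lambda>x. x \<otimes> c) ` carrier G = carrier G"
  proof
    show "carrier G \<subseteq> (\<lambda>x. x \<otimes> c) ` carrier G"
    proof
      fix y assume y: "y \<in> carrier G"
      then have "y = (y \<otimes> inv c) \<otimes> c" using c by (simp add: m_assoc)
      then show "y \<in> (\<lambda>x. x \<otimes> c) ` carrier G" using y c by blast
    qed
  qed (use c in auto)
qed

lemma sigmas_value: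
  "\<sigma> \<in> sigmas G \<Longrightarrow> l \<in> carrier G \<Longrightarrow> \<sigma> l = -1 \<or> \<sigma> l = 1"
  unfolding sigmas_def by auto

lemma sigmas_mult:
  assumes "\<sigma> \<in> sigmas G" "l \<in> carrier G" "m \<in> carrier G"
  shows "\<sigma> l * \<sigma> m = (if \<sigma> l \<noteq> \<sigma> m then -1 else 1)"
  using sigmas_value[OF assms(1,2)] sigmas_value[OF assms(1,3)] by auto

context group
begin

lemma autocorr_eq_card_disagreements:
  assumes fin: "finite (carrier G)" and \<sigma>: "\<sigma> \<in> sigmas G" and f: "f \<in> carrier G"
  shows "autocorr G \<sigma> f =
    real (card (carrier G)) - 2 * real (card {l \<in> carrier G. \<sigma> l \<noteq> \<sigma> (l \<otimes> f)})"
proof -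
  define D where "D = {l \<in> carrier G. \<sigma> l \<noteq> \<sigma> (l \<otimes> f)}"
  have D: "D \<subseteq> carrier G" "carrier G - D = {l \<in> carrier G. \<sigma> l = \<sigma> (l \<otimes> f)}"
    unfolding D_def by auto
  have "autocorr G \<sigma> f = (\<Sum>l\<in>carrier G. if \<sigma> l \<noteq> \<sigma> (l \<otimes> f) then -1 else 1)"
    using f \<sigma> by (simp add: autocorr_def sigmas_mult)
  also have "\<dots> = real (card (carrier G - D)) - real (card D)"
    using fin D by (simp add: sum.If_cases D_def Int_def)
  also have "\<dots> = real (card (carrier G)) - 2 * real (card D)"
    using card_Diff_subset[OF finite_subset[OF D(1) fin] D(1)] card_mono[OF fin D(1)] by simp
  finally show ?thesis unfolding D_def .
qed

lemma even_card_disagreements: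
  assumes fin: "finite (carrier G)" and \<sigma>: "\<sigma> \<in> sigmas G" and f: "f \<in> carrier G"
  shows "even (card {l \<in> carrier G. \<sigma> l \<noteq> \<sigma> (l \<otimes> f)})"
proof -
  have "(\<Prod>l\<in>carrier G. \<sigma> l * \<sigma> (l \<otimes> f)) = (\<Prod>l\<in>carrier G. \<sigma> l) * (\<Prod>l\<in>carrier G. \<sigma> (l \<otimes> f))"
    by (rule prod.distrib)
  also have "\<dots> = (\<Prod>l\<in>carrier G. \<sigma> l * \<sigma> l)"
    by (simp add: prod.reindex_bij_betw[OF bij_betw_mult_right[OF f]] prod.distrib)
  also have "\<dots> = 1"
    using sigmas_value[OF \<sigma>] by (intro prod.neutral) fastforce
  moreover have "(\<Prod>l\<in>carrier G. \<sigma> l * \<sigma> (l \<otimes> f)) =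
      (-1) ^ card {l \<in> carrier G. \<sigma> l \<noteq> \<sigma> (l \<otimes> f)}"
    using fin f \<sigma> by (simp add: sigmas_mult prod.If_cases Int_def)
  ultimately have "(-1::real) ^ card {l \<in> carrier G. \<sigma> l \<noteq> \<sigma> (l \<otimes> f)} = 1"
    by simp
  then show ?thesis
    by (metis neg_one_odd_power one_neq_neg_one)
qed

lemma autocorr_value:
  assumes fin: "finite (carrier G)" and \<sigma>: "\<sigma> \<in> sigmas G" and f: "f \<in> carrier G"
  shows "autocorr G \<sigma> f \<in>
    {real (card (carrier G)) - 4 * real k | k. k \<le> card (carrier G) div 2}"
proof -
  let ?D = "{l \<in> carrier G. \<sigma> l \<noteq> \<sigma> (l \<otimes> f)}"
  obtain k where k: "card ?D = 2 * k"
    using even_card_disagreements[OF fin \<sigma> f] by blast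
  have "card ?D \<le> card (carrier G)" using fin by (intro card_mono) auto
  then have "k \<le> card (carrier G) div 2" using k by simp
  moreover have "autocorr G \<sigma> f = real (card (carrier G)) - 4 * real k"
    using autocorr_eq_card_disagreements[OF fin \<sigma> f] k by simp
  ultimately show ?thesis by blast
qed

lemma autocorr_inv:
  assumes f: "f \<in> carrier G"
  shows "autocorr G \<sigma> (inv f) = autocorr G \<sigma> f"
proof -
  have "(\<Sum>l\<in>carrier G. \<sigma> l * \<sigma> (l \<otimes> inv f)) =
        (\<Sum>l\<in>carrier G. \<sigma> (l \<otimes> f) * \<sigma> ((l \<otimes> f) \<otimes> inv f))"
    by (rule sum.reindex_bij_betw[OF bij_betw_mult_right[OF f], symmetric])
  also have "\<dots> = (\<Sum>l\<in>carrier G. \<sigma> l * \<sigma> (l \<otimes> f))"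
    using f by (intro sum.cong) (simp_all add: m_assoc mult.commute)
  finally show ?thesis using f by (simp add: autocorr_def)
qed

lemma autocorr_in_even_funs: "autocorr G \<sigma> \<in> even_funs G"
  unfolding even_funs_def using autocorr_inv by (auto simp: autocorr_def)

lemma autocorr_image_subset_C_set:
  assumes "finite (carrier G)"
  shows "autocorr G ` sigmas G \<subseteq> C_set G"
  using autocorr_value[OF assms] autocorr_in_even_funs
  unfolding C_set_def by (auto simp: autocorr_def)

lemma autocorr_const_one:
  "autocorr G (\<lambda>x\<in>carrier G. 1) = (\<lambda>f\<in>carrier G. real (card (carrier G)))"
  unfolding autocorr_def by (rule ext) auto

lemma const_card_in_autocorr_image:
  "(\<lambda>f\<in>carrier G. real (card (carrier G))) \<in> autocorr G ` sigmas G"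
proof -
  have "(\<lambda>x\<in>carrier G. 1) \<in> sigmas G" unfolding sigmas_def by auto
  then show ?thesis using autocorr_const_one by (metis image_eqI)
qed

end

lemma Psi_PiE_image:
  assumes g: "bij_betw g (carrier G) (carrier G)"
  shows "Psi G g ` (carrier G \<rightarrow>\<^sub>E A) = carrier G \<rightarrow>\<^sub>E A"
proof
  show "Psi G g ` (carrier G \<rightarrow>\<^sub>E A) \<subseteq> carrier G \<rightarrow>\<^sub>E A"
    using bij_betwE[OF bij_betw_inv_into[OF g]] by (auto simp: Psi_def PiE_iff)
  show "carrier G \<rightarrow>\<^sub>E A \<subseteq> Psi G g ` (carrier G \<rightarrow>\<^sub>E A)"
  proof
    fix \<sigma> assume \<sigma>: "\<sigma> \<in> carrier G \<rightarrow>\<^sub>E A"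
    have "Psi G g (\<lambda>x\<in>carrier G. \<sigma> (g x)) = \<sigma>"
      using \<sigma> bij_betw_inv_into[OF g] bij_betw_inv_into_right[OF g]
      by (intro ext) (auto simp: Psi_def bij_betw_def PiE_def extensional_def)
    moreover have "(\<lambda>x\<in>carrier G. \<sigma> (g x)) \<in> carrier G \<rightarrow>\<^sub>E A"
      using \<sigma> g by (auto simp: bij_betw_def)
    ultimately show "\<sigma> \<in> Psi G g ` (carrier G \<rightarrow>\<^sub>E A)" by (metis image_eqI)
  qed
qed

lemma (in group) autocorr_Psi:
  assumes g: "g \<in> iso G G"
  shows "autocorr G (Psi G g \<sigma>) = Psi G g (autocorr G \<sigma>)"
proof
  fix f
  define h where "h = inv_into (carrier G) g"
  have h: "h \<in> iso G G" unfolding h_def by (rule iso_set_sym[OF g])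
  then have h_bij: "bij_betw h (carrier G) (carrier G)" by (simp add: iso_def)
  show "autocorr G (Psi G g \<sigma>) f = Psi G g (autocorr G \<sigma>) f"
  proof (cases "f \<in> carrier G")
    case True
    have "autocorr G (Psi G g \<sigma>) f = (\<Sum>l\<in>carrier G. \<sigma> (h l) * \<sigma> (h l \<otimes> h f))"
      using True h by (simp add: autocorr_def Psi_def h_def[symmetric] iso_def hom_def)
    also have "\<dots> = (\<Sum>l\<in>carrier G. \<sigma> l * \<sigma> (l \<otimes> h f))"
      by (rule sum.reindex_bij_betw[OF h_bij])
    also have "\<dots> = Psi G g (autocorr G \<sigma>) f"
      using True h_bij by (simp add: autocorr_def Psi_def h_def[symmetric] bij_betwE)
    finally show ?thesis .
  qed (simp add: autocorr_def Psi_def)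
qed

lemma (in group) Psi_autocorr_image:
  assumes g: "g \<in> iso G G"
  shows "Psi G g ` autocorr G ` sigmas G = autocorr G ` sigmas G"
proof -
  have "Psi G g ` autocorr G ` sigmas G = autocorr G ` Psi G g ` sigmas G"
    using autocorr_Psi[OF g] by (simp add: image_image)
  also have "Psi G g ` sigmas G = sigmas G"
    using g unfolding sigmas_def iso_def by (simp add: Psi_PiE_image)
  finally show ?thesis .
qed

definition Zmod :: "nat \<Rightarrow> nat monoid" where
  "Zmod n = \<lparr>carrier = {..<n}, monoid.mult = (\<lambda>a b. (a + b) mod n), one = 0\<rparr>"

lemma Zmod_comm_group:
  assumes "0 < n" shows "comm_group (Zmod n)"
proof (rule comm_groupI)
  fix x y z
  show "x \<otimes>\<^bsub>Zmod n\<^esub> y \<otimes>\<^bsub>Zmod n\<^esub> z = x \<otimes>\<^bsub>Zmod n\<^esub> (y \<otimes>\<^bsub>Zmod n\<^esub> z)"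
    by (simp add: Zmod_def mod_add_left_eq mod_add_right_eq add.assoc)
next
  fix x y assume "x \<in> carrier (Zmod n)" "y \<in> carrier (Zmod n)"
  then show "x \<otimes>\<^bsub>Zmod n\<^esub> y \<in> carrier (Zmod n)" "x \<otimes>\<^bsub>Zmod n\<^esub> y = y \<otimes>\<^bsub>Zmod n\<^esub> x"
    using assms by (auto simp: Zmod_def add.commute)
next
  show "\<one>\<^bsub>Zmod n\<^esub> \<in> carrier (Zmod n)" using assms by (simp add: Zmod_def)
next
  fix x assume x: "x \<in> carrier (Zmod n)"
  then show "\<one>\<^bsub>Zmod n\<^esub> \<otimes>\<^bsub>Zmod n\<^esub> x = x" by (simp add: Zmod_def)
  have "(n - x) mod n \<otimes>\<^bsub>Zmod n\<^esub> x = \<one>\<^bsub>Zmod n\<^esub>"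
    using x by (simp add: Zmod_def mod_add_left_eq)
  moreover have "(n - x) mod n \<in> carrier (Zmod n)" using assms by (simp add: Zmod_def)
  ultimately show "\<exists>y\<in>carrier (Zmod n). y \<otimes>\<^bsub>Zmod n\<^esub> x = \<one>\<^bsub>Zmod n\<^esub>" by blast
qed

lemma (in group) convex_comb_even_funs:
  "s0 \<in> even_funs G \<Longrightarrow> s1 \<in> even_funs G \<Longrightarrow> convex_comb G t s0 s1 \<in> even_funs G"
  by (simp add: even_funs_def convex_comb_def)

lemma carrier_Zmod4: "carrier (Zmod 4) = {0, 1, 2, 3}"
  by (auto simp: Zmod_def)

lemma Zmod4_mult: "x \<otimes>\<^bsub>Zmod 4\<^esub> y = (x + y) mod 4"
  by (simp add: Zmod_def)

lemma Zmod4_autocorr_not_convex: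
  "\<not> convex_in (Zmod 4) (C_set (Zmod 4)) (autocorr (Zmod 4) ` sigmas (Zmod 4))"
proof
  let ?Z = "Zmod 4"
  interpret comm_group ?Z by (rule Zmod_comm_group) simp
  assume convex: "convex_in ?Z (C_set ?Z) (autocorr ?Z ` sigmas ?Z)"
  let ?s0 = "\<lambda>x\<in>carrier ?Z. 1::real"
  let ?s1 = "\<lambda>x\<in>carrier ?Z. if even x then 1 else -1::real"
  let ?mid = "convex_comb ?Z (1/2) (autocorr ?Z ?s0) (autocorr ?Z ?s1)"
  have sigmas: "?s0 \<in> sigmas ?Z" "?s1 \<in> sigmas ?Z" unfolding sigmas_def by auto
  have mid: "?mid = (\<lambda>f\<in>carrier ?Z. if even f then 4 else 0)"
  proof
    fix f
    consider "f = 0" | "f = 1" | "f = 2" | "f = 3" | "f \<notin> carrier ?Z"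
      unfolding carrier_Zmod4 by blast
    then show "?mid f = (\<lambda>f\<in>carrier ?Z. if even f then 4 else 0) f"
      by cases (simp_all add: convex_comb_def autocorr_def carrier_Zmod4 Zmod4_mult)
  qed
  have "(if even f then 4 else 0) \<in>
      {real (card (carrier ?Z)) - 4 * real k | k. k \<le> card (carrier ?Z) div 2}" for f :: nat
  proof -
    have "(if even f then 4 else 0) =
        real (card (carrier ?Z)) - 4 * real (if even f then 0 else 1 :: nat)"
      by (simp add: carrier_Zmod4)
    moreover have "(if even f then 0 else 1 :: nat) \<le> card (carrier ?Z) div 2"
      by (simp add: carrier_Zmod4)
    ultimately show ?thesis by blast
  qed
  then have "?mid \<in> carrier ?Z \<rightarrow>\<^sub>E
      {real (card (carrier ?Z)) - 4 * real k | k. k \<le> card (carrier ?Z) div 2}"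
    unfolding mid by auto
  moreover have "?mid \<in> even_funs ?Z"
    by (intro convex_comb_even_funs autocorr_in_even_funs)
  ultimately have "?mid \<in> C_set ?Z" unfolding C_set_def by blast
  moreover have "0 < (1/2::real)" "(1/2::real) < 1" by simp_all
  ultimately have "?mid \<in> autocorr ?Z ` sigmas ?Z"
    using convex sigmas unfolding convex_in_def by blast
  then obtain \<sigma> where \<sigma>: "\<sigma> \<in> sigmas ?Z" and eq: "?mid = autocorr ?Z \<sigma>"
    by blast
  have sign: "\<sigma> i = -1 \<or> \<sigma> i = 1" if "i \<in> {0, 1, 2, 3}" for i
    using sigmas_value[OF \<sigma>, of i] that by (simp add: carrier_Zmod4)
  have "\<sigma> 0 * \<sigma> 1 + \<sigma> 1 * \<sigma> 2 + \<sigma> 2 * \<sigma> 3 + \<sigma> 3 * \<sigma> 0 = 0"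
    using fun_cong[OF eq, of 1] unfolding mid
    by (simp add: autocorr_def carrier_Zmod4 Zmod4_mult) (simp add: eval_nat_numeral algebra_simps)
  moreover have "\<sigma> 0 * \<sigma> 2 + \<sigma> 1 * \<sigma> 3 = 2"
    using fun_cong[OF eq, of 2] unfolding mid
    by (simp add: autocorr_def carrier_Zmod4 Zmod4_mult)
  ultimately show False using sign[of 0] sign[of 1] sign[of 2] sign[of 3] by auto
qed

theorem mainTheorem4:
  shows "(\<forall>(G :: ('a, 'b) monoid_scheme). comm_group G \<and> finite (carrier G) \<longrightarrow>
            autocorr G ` sigmas G \<subseteq> C_set G \<and>
            (\<lambda>f\<in>carrier G. real (card (carrier G))) \<in> autocorr G ` sigmas G)
    \<and> (\<exists>F :: nat monoid. comm_group F \<and> finite (carrier F) \<and>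
            \<not> convex_in F (C_set F) (autocorr F ` sigmas F))
    \<and> (\<forall>(G :: ('a, 'b) monoid_scheme) g. comm_group G \<and> finite (carrier G) \<and> g \<in> iso G G \<longrightarrow>
            (\<forall>\<sigma>\<in>sigmas G. autocorr G (Psi G g \<sigma>) = Psi G g (autocorr G \<sigma>)) \<and>
            Psi G g ` (autocorr G ` sigmas G) = autocorr G ` sigmas G)"
proof (intro conjI allI impI)
  fix G :: "('a, 'b) monoid_scheme"
  assume G: "comm_group G \<and> finite (carrier G)"
  then interpret comm_group G by blast
  show "autocorr G ` sigmas G \<subseteq> C_set G"
    using G by (simp add: autocorr_image_subset_C_set)
  show "(\<lambda>f\<in>carrier G. real (card (carrier G))) \<in> autocorr G ` sigmas G"
    by (rule const_card_in_autocorr_image)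
next
  show "\<exists>F :: nat monoid. comm_group F \<and> finite (carrier F) \<and>
      \<not> convex_in F (C_set F) (autocorr F ` sigmas F)"
    using Zmod_comm_group[of 4] Zmod4_autocorr_not_convex by (auto simp: carrier_Zmod4)
next
  fix G :: "('a, 'b) monoid_scheme" and g
  assume G: "comm_group G \<and> finite (carrier G) \<and> g \<in> iso G G"
  then interpret comm_group G by blast
  show "\<forall>\<sigma>\<in>sigmas G. autocorr G (Psi G g \<sigma>) = Psi G g (autocorr G \<sigma>)"
    using G autocorr_Psi by blast
  show "Psi G g ` autocorr G ` sigmas G = autocorr G ` sigmas G"
    using G Psi_autocorr_image by blast
qed

end
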